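(* Let $n\ge2$, $r$ be an integer and $Q$ a real number with $0<Q\le2$. Consider nontrivial solutions $P\in\mathrm{Mat}(n^2,\mathbb{C})$ of rank $r$ to $$P^*=P,\quad P^2=P,\quad Q^2(P_1P_2P_1-P_2P_1P_2)=P_1-P_2,$$ where $P_1=P\otimes I_n$, $P_2=I_n\otimes P$. If $n\ge 2r$, no such solution exists, except in the case $Q=2$, $n=2$, $r=1$. If $2r\ge 2n^2-n$, no such solution exists, except in the case $Q=2$, $n=2$, $r=3$.
   Context: $I_n$ is the $n\times n$ identity matrix and $\otimes$ is the Kronecker product. A solution is trivial if $P=0$ or $P=I_n\otimes I_n$, nontrivial otherwise. *)

theory Defs
  imports "Jordan_Normal_Form.Schur_Decomposition" "Jordan_Normal_Form.DL_Rank"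
begin

definition kron :: "'a :: times mat \<Rightarrow> 'a mat \<Rightarrow> 'a mat" where
  "kron A B = mat (dim_row A * dim_row B) (dim_col A * dim_col B)
     (\<lambda>(i, j). A $$ (i div dim_row B, j div dim_col B) * B $$ (i mod dim_row B, j mod dim_col B))"

end

theory Submission
  imports Defs
begin

(* Write P1 = P (x) I and P2 = I (x) P, two orthogonal projections on C^n (x) C^n (x) C^n, and
   c = min 1 (1 / Q^2).  If P1 v = v, then p = <v, P2 v> and q = |P1 P2 v|^2 satisfy
   Q^2 (p - q) = |v|^2 - p by the relation and p^2 <= |v|^2 q by Cauchy-Schwarz, which together
   force p >= c |v|^2.  Taking v = (P e_k) (x) x and summing over k gives
   c tr(P) |x|^2 <= lambda <x, A x>, where A = Tr_1 P is the partial trace of P over the first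
   factor and lambda is its largest eigenvalue.  So A >= (c tr(P) / lambda) I, and comparing traces,
   lambda + (n - 1) c tr(P) / lambda <= tr A = tr P, whence 4 (n - 1) c <= tr P = rank P.
   Since I - P is again a nontrivial solution, also 4 (n - 1) c <= n^2 - rank P.  As c >= 1/4,
   with equality only for Q = 2, the two bounds leave only the stated exceptions. *)

section \<open>Rank of an idempotent matrix\<close>

lemma (in vec_space) col_in_span_of_maximal:
  assumes A: "A \<in> carrier_mat n nc" and j: "j < nc"
    and max: "maximal S (\<lambda>T. T \<subseteq> set (cols A) \<and> lin_indpt T)"
  shows "col A j \<in> span S"
proof -
  have SA: "S \<subseteq> set (cols A)" and li: "lin_indpt S" using max unfolding maximal_def by auto
  have Sc: "S \<subseteq> carrier_vec n" using SA A by (auto simp: cols_def)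
  show ?thesis
  proof (cases "col A j \<in> S")
    case True
    then show ?thesis using in_own_span[OF Sc] by blast
  next
    case False
    have "\<not> lin_indpt (S \<union> {col A j})"
    proof
      assume "lin_indpt (S \<union> {col A j})"
      moreover have "S \<union> {col A j} \<subseteq> set (cols A)" using SA j A by (auto simp: cols_def)
      ultimately have "S \<union> {col A j} = S" using max unfolding maximal_def by blast
      then show False using False by blast
    qed
    then show ?thesis using lin_dep_iff_in_span[OF Sc li _ False] A j by simp
  qed
qed

lemma (in vec_space) rank_factorization:
  assumes A: "A \<in> carrier_mat n nc"
  obtains B C where "B \<in> carrier_mat n (rank A)" "C \<in> carrier_mat (rank A) nc" "A = B * C"
    "set (cols B) \<subseteq> set (cols A)" "distinct (cols B)" "lin_indpt (set (cols B))"
proof -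
  let ?indpt = "\<lambda>T. T \<subseteq> set (cols A) \<and> lin_indpt T"
  obtain S where max: "maximal S ?indpt"
    using maximal_exists[of ?indpt "card (set (cols A))" "{}"]
    by (meson List.finite_set card_mono empty_iff empty_subsetI finite_lin_indpt2 rev_finite_subset)
  have SA: "S \<subseteq> set (cols A)" and li: "lin_indpt S" using max unfolding maximal_def by auto
  have Sc: "S \<subseteq> carrier_vec n" using SA A by (auto simp: cols_def)
  obtain bs where bs: "set bs = S" "distinct bs"
    using finite_distinct_list[OF finite_subset[OF SA List.finite_set]] by blast
  have r: "rank A = length bs"
    using rank_card_indpt[OF A max] bs distinct_card by metis
  define B where "B = mat_of_cols n bs"
  have B: "B \<in> carrier_mat n (rank A)" unfolding B_def r by simp
  have colsB: "cols B = bs" unfolding B_def using bs Sc by simp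
  have "\<exists>c. j < nc \<longrightarrow> c \<in> carrier_vec (rank A) \<and> col A j = B *\<^sub>v c" for j
  proof (cases "j < nc")
    case j: True
    obtain a where "lincomb a S = col A j"
      using finite_in_span[OF finite_subset[OF SA List.finite_set] Sc col_in_span_of_maximal[OF A j max]]
      by blast
    moreover have "B *\<^sub>v vec (rank A) (\<lambda>i. a (col B i)) = lincomb a (set (cols B))"
      using mat_mult_eq_lincomb[OF B] colsB bs by simp
    ultimately show ?thesis using colsB bs by (intro exI[of _ "vec (rank A) (\<lambda>i. a (col B i))"]) auto
  qed simp
  then obtain coeff where coeff: "\<And>j. j < nc \<Longrightarrow> coeff j \<in> carrier_vec (rank A) \<and> col A j = B *\<^sub>v coeff j"
    using choice[of "\<lambda>j c. j < nc \<longrightarrow> c \<in> carrier_vec (rank A) \<and> col A j = B *\<^sub>v c"] by blast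
  define C where "C = mat (rank A) nc (\<lambda>(i, j). coeff j $ i)"
  have C: "C \<in> carrier_mat (rank A) nc" unfolding C_def by simp
  have "A = B * C"
  proof (rule mat_col_eqI)
    fix j assume "j < dim_col (B * C)"
    then have j: "j < nc" using C by simp
    have "col C j = coeff j" using coeff[OF j] j unfolding C_def by (auto simp: col_def)
    then show "col A j = col (B * C) j" using coeff[OF j] col_mult2[OF B C j] by simp
  qed (use A B C in auto)
  moreover have "lin_indpt (set (cols B))" using li colsB bs by simp
  ultimately show thesis using that B C colsB bs SA by simp
qed

lemma (in vec_space) lin_indpt_cols_mult_vec_inj:
  assumes B: "B \<in> carrier_mat n r" and dist: "distinct (cols B)" and li: "lin_indpt (set (cols B))"
    and v: "v \<in> carrier_vec r" and w: "w \<in> carrier_vec r" and eq: "B *\<^sub>v v = B *\<^sub>v w"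
  shows "v = w"
proof -
  have "B *\<^sub>v (v - w) = 0\<^sub>v n" using eq B v w by (simp add: mult_minus_distrib_mat_vec)
  then have vw: "v - w = 0\<^sub>v r" using lin_depI[OF B _ _ _ dist] li v w by (meson minus_carrier_vec)
  show ?thesis
  proof (rule eq_vecI)
    fix k assume "k < dim_vec w"
    then show "v $ k = w $ k" using arg_cong[OF vw, of "\<lambda>u. u $ k"] v w by simp
  qed (use v w in simp)
qed

lemma (in vec_space) idempotent_rank_factorization:
  assumes P: "P \<in> carrier_mat n n" and idem: "P * P = P"
  obtains B C where "B \<in> carrier_mat n (rank P)" "C \<in> carrier_mat (rank P) n" "P = B * C"
    "C * B = 1\<^sub>m (rank P)"
proof -
  obtain B C where B: "B \<in> carrier_mat n (rank P)" and C: "C \<in> carrier_mat (rank P) n"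
    and PBC: "P = B * C" and colsB: "set (cols B) \<subseteq> set (cols P)"
    and dist: "distinct (cols B)" and li: "lin_indpt (set (cols B))"
    by (rule rank_factorization[OF P])
  have PB: "P * B = B"
  proof (rule mat_col_eqI)
    fix i assume "i < dim_col B"
    then have "col B i \<in> set (cols B)" by (simp add: cols_def)
    then have "col B i \<in> set (cols P)" using colsB by blast
    then obtain j where j: "j < n" "col B i = col P j" using P by (auto simp: cols_def)
    have "col (P * B) i = P *\<^sub>v col P j" using col_mult2[OF P B] \<open>i < dim_col B\<close> j B by simp
    also have "\<dots> = col B i" using col_mult2[OF P P j(1)] idem j by simp
    finally show "col (P * B) i = col B i" .
  qed (use P B in auto)
  have "C * B = 1\<^sub>m (rank P)"
  proof (rule mat_col_eqI)
    fix i assume "i < dim_col (1\<^sub>m (rank P))"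
    then have i: "i < rank P" by simp
    have "B * (C * B) = B" using PBC PB B C by (metis assoc_mult_mat)
    then have "B *\<^sub>v col (C * B) i = col B i" using B C i by (metis col_mult2 mult_carrier_mat)
    also have "\<dots> = B *\<^sub>v unit_vec (rank P) i"
      using B i by (metis col_mult2 col_one one_carrier_mat right_mult_one_mat)
    finally have "col (C * B) i = unit_vec (rank P) i"
      using lin_indpt_cols_mult_vec_inj[OF B dist li] B C i by simp
    then show "col (C * B) i = col (1\<^sub>m (rank P)) i" using i by simp
  qed (use C B in auto)
  then show thesis using that B C PBC by blast
qed

lemma diag_sum_mult_comm:
  fixes B C :: "'a :: comm_ring mat"
  assumes B: "B \<in> carrier_mat n r" and C: "C \<in> carrier_mat r n"
  shows "(\<Sum>i<n. (B * C) $$ (i, i)) = (\<Sum>k<r. (C * B) $$ (k, k))"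
proof -
  have "(\<Sum>i<n. (B * C) $$ (i, i)) = (\<Sum>i<n. \<Sum>k<r. B $$ (i, k) * C $$ (k, i))"
    using B C by (intro sum.cong refl) (auto simp: scalar_prod_def lessThan_atLeast0)
  also have "\<dots> = (\<Sum>k<r. \<Sum>i<n. C $$ (k, i) * B $$ (i, k))"
    by (subst sum.swap) (simp add: mult.commute)
  also have "\<dots> = (\<Sum>k<r. (C * B) $$ (k, k))"
    using B C by (intro sum.cong refl) (auto simp: scalar_prod_def lessThan_atLeast0)
  finally show ?thesis .
qed

lemma rank_idempotent_eq_diag_sum:
  fixes P :: "'a :: field mat"
  assumes P: "P \<in> carrier_mat N N" and idem: "P * P = P"
  shows "of_nat (vec_space.rank N P) = (\<Sum>i<N. P $$ (i, i))"
proof -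
  interpret vec_space "TYPE('a)" N .
  obtain B C where B: "B \<in> carrier_mat N (rank P)" and C: "C \<in> carrier_mat (rank P) N"
    and "P = B * C" and CB: "C * B = 1\<^sub>m (rank P)"
    by (rule idempotent_rank_factorization[OF P idem])
  then have "(\<Sum>i<N. P $$ (i, i)) = (\<Sum>k<rank P. (C * B) $$ (k, k))"
    using diag_sum_mult_comm[OF B C] by simp
  then show ?thesis unfolding CB by simp
qed

(* A vector in C^n and an n x n matrix are represented by functions on indices of which only
   the values below n matter; the dimension n is an explicit argument of every operation. *)

definition cinner :: "nat \<Rightarrow> (nat \<Rightarrow> complex) \<Rightarrow> (nat \<Rightarrow> complex) \<Rightarrow> complex" where
  "cinner n a b = (\<Sum>i<n. cnj (a i) * b i)"

definition mvec :: "nat \<Rightarrow> (nat \<Rightarrow> nat \<Rightarrow> complex) \<Rightarrow> (nat \<Rightarrow> complex) \<Rightarrow> nat \<Rightarrow> complex" where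
  "mvec n M v = (\<lambda>i. \<Sum>j<n. M i j * v j)"

definition mmult ::
    "nat \<Rightarrow> (nat \<Rightarrow> nat \<Rightarrow> complex) \<Rightarrow> (nat \<Rightarrow> nat \<Rightarrow> complex) \<Rightarrow> nat \<Rightarrow> nat \<Rightarrow> complex" where
  "mmult n A B = (\<lambda>i j. \<Sum>k<n. A i k * B k j)"

definition kdelta :: "nat \<Rightarrow> nat \<Rightarrow> complex" where
  "kdelta i j = (if i = j then 1 else 0)"

definition hermitian_fun :: "nat \<Rightarrow> (nat \<Rightarrow> nat \<Rightarrow> complex) \<Rightarrow> bool" where
  "hermitian_fun n M \<longleftrightarrow> (\<forall>i<n. \<forall>j<n. M j i = cnj (M i j))"

definition psd_fun :: "nat \<Rightarrow> (nat \<Rightarrow> nat \<Rightarrow> complex) \<Rightarrow> bool" where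
  "psd_fun n M \<longleftrightarrow> hermitian_fun n M \<and> (\<forall>y. 0 \<le> Re (cinner n y (mvec n M y)))"

lemma cinner_cong:
  "(\<And>i. i < n \<Longrightarrow> a i = a' i) \<Longrightarrow> (\<And>i. i < n \<Longrightarrow> b i = b' i) \<Longrightarrow> cinner n a b = cinner n a' b'"
  unfolding cinner_def by (intro sum.cong) auto

lemma cinner_commute: "cinner n b a = cnj (cinner n a b)"
  unfolding cinner_def by (simp add: mult.commute)

lemma Re_cinner_self: "Re (cinner n y y) = (\<Sum>i<n. (cmod (y i))\<^sup>2)"
  unfolding cinner_def cmod_power2 by (simp add: power2_eq_square)

lemma cinner_self_real: "cinner n y y = of_real (Re (cinner n y y))"
  unfolding cinner_def by (simp add: complex_eq_iff Im_sum)

lemma Re_cinner_self_nonneg: "0 \<le> Re (cinner n y y)"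
  unfolding Re_cinner_self by (simp add: sum_nonneg)

lemma Re_cinner_self_eq_0:
  assumes "Re (cinner n y y) = 0" and "i < n"
  shows "y i = 0"
proof -
  have "(cmod (y i))\<^sup>2 \<le> (\<Sum>i<n. (cmod (y i))\<^sup>2)"
    using assms(2) by (intro member_le_sum) auto
  then show ?thesis using assms(1) unfolding Re_cinner_self by simp
qed

lemma cinner_diff_right: "cinner n a (\<lambda>i. x i - y i) = cinner n a x - cinner n a y"
  unfolding cinner_def by (simp add: algebra_simps sum_subtractf)

lemma cinner_scale_right: "cinner n a (\<lambda>i. k * b i) = k * cinner n a b"
  unfolding cinner_def by (simp add: sum_distrib_left mult_ac)

lemma cinner_scale: "cinner n (\<lambda>i. k * a i) (\<lambda>i. k * b i) = cnj k * k * cinner n a b"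
  unfolding cinner_def by (simp add: sum_distrib_left mult_ac)

lemma cinner_diff_scale:
  "cinner n (\<lambda>i. a i - l * b i) (\<lambda>i. x i - l * y i) =
   cinner n a x - l * cinner n a y - cnj l * cinner n b x + cnj l * l * cinner n b y"
proof -
  have "\<And>i. cnj (a i - l * b i) * (x i - l * y i) =
     cnj (a i) * x i - l * (cnj (a i) * y i) - cnj l * (cnj (b i) * x i) + cnj l * l * (cnj (b i) * y i)"
    by (simp add: algebra_simps)
  then show ?thesis unfolding cinner_def
    by (simp only: sum.distrib sum_subtractf sum_distrib_left)
qed

lemma kdelta_commute: "kdelta i j = kdelta j i"
  by (simp add: kdelta_def)

lemma cnj_kdelta: "cnj (kdelta i j) = kdelta i j"
  by (simp add: kdelta_def)

lemma sum_kdelta_left: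
  assumes "i < n"
  shows "(\<Sum>j<n. kdelta i j * f j) = f i"
proof -
  have "(\<Sum>j<n. kdelta i j * f j) = (\<Sum>j<n. if i = j then f j else 0)"
    by (intro sum.cong) (auto simp: kdelta_def)
  then show ?thesis using assms by simp
qed

lemma sum_kdelta_right:
  assumes "j < n"
  shows "(\<Sum>i<n. f i * kdelta i j) = f j"
proof -
  have "(\<Sum>i<n. f i * kdelta i j) = (\<Sum>i<n. if i = j then f i else 0)"
    by (intro sum.cong) (auto simp: kdelta_def)
  then show ?thesis using assms by simp
qed

lemma cinner_kdelta_left: "i < n \<Longrightarrow> cinner n (kdelta i) v = v i"
  unfolding cinner_def cnj_kdelta by (rule sum_kdelta_left)

lemma mvec_cong: "(\<And>j. j < n \<Longrightarrow> v j = w j) \<Longrightarrow> mvec n M v i = mvec n M w i"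
  unfolding mvec_def by (intro sum.cong) auto

lemma mvec_diff_scale: "mvec n M (\<lambda>j. x j - l * y j) = (\<lambda>i. mvec n M x i - l * mvec n M y i)"
  unfolding mvec_def by (simp add: algebra_simps sum_subtractf sum_distrib_left)

lemma mvec_scale: "mvec n M (\<lambda>j. k * y j) = (\<lambda>i. k * mvec n M y i)"
  unfolding mvec_def by (simp add: sum_distrib_left mult_ac)

lemma mvec_kdelta: "i < n \<Longrightarrow> mvec n kdelta v i = v i"
  unfolding mvec_def by (rule sum_kdelta_left)

lemma mvec_mmult: "mvec n (mmult n A B) v = mvec n A (mvec n B v)"
proof -
  have "mvec n (mmult n A B) v i = mvec n A (mvec n B v) i" for i
  proof -
    have "mvec n (mmult n A B) v i = (\<Sum>j<n. \<Sum>k<n. A i k * B k j * v j)"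
      unfolding mvec_def mmult_def by (simp add: sum_distrib_right)
    also have "\<dots> = (\<Sum>k<n. \<Sum>j<n. A i k * B k j * v j)" by (rule sum.swap)
    also have "\<dots> = mvec n A (mvec n B v) i"
      unfolding mvec_def by (simp add: sum_distrib_left mult.assoc)
    finally show ?thesis .
  qed
  then show ?thesis by blast
qed

lemma mmult_cong:
  "(\<And>k. k < n \<Longrightarrow> A i k = A' i k) \<Longrightarrow> (\<And>k. k < n \<Longrightarrow> B k j = B' k j)
    \<Longrightarrow> mmult n A B i j = mmult n A' B' i j"
  unfolding mmult_def by (intro sum.cong) auto

lemma mmult_add_left:
  "mmult n (\<lambda>i j. A i j + B i j) C = (\<lambda>i j. mmult n A C i j + mmult n B C i j)"
  unfolding mmult_def by (simp add: algebra_simps sum.distrib)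

lemma mmult_diff_left:
  "mmult n (\<lambda>i j. A i j - B i j) C = (\<lambda>i j. mmult n A C i j - mmult n B C i j)"
  unfolding mmult_def by (simp add: algebra_simps sum_subtractf)

lemma mmult_diff_right:
  "mmult n A (\<lambda>i j. B i j - C i j) = (\<lambda>i j. mmult n A B i j - mmult n A C i j)"
  unfolding mmult_def by (simp add: algebra_simps sum_subtractf)

lemma mmult_kdelta_left: "i < n \<Longrightarrow> mmult n kdelta B i j = B i j"
  unfolding mmult_def by (rule sum_kdelta_left)

lemma mmult_kdelta_right: "j < n \<Longrightarrow> mmult n A kdelta i j = A i j"
  unfolding mmult_def by (rule sum_kdelta_right)

lemma mvec_cong_mat: "(\<And>j. j < n \<Longrightarrow> M i j = M' i j) \<Longrightarrow> mvec n M v i = mvec n M' v i"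
  unfolding mvec_def by (intro sum.cong) auto

lemma cinner_mvec_double_sum:
  "cinner n a (mvec n M b) = (\<Sum>i<n. \<Sum>j<n. cnj (a i) * M i j * b j)"
  unfolding cinner_def mvec_def by (simp add: sum_distrib_left mult.assoc)

lemma cinner_mvec_hermitian:
  assumes "hermitian_fun n M"
  shows "cinner n (mvec n M a) b = cinner n a (mvec n M b)"
proof -
  have "cinner n (mvec n M a) b = (\<Sum>i<n. \<Sum>j<n. cnj (M i j) * cnj (a j) * b i)"
    unfolding cinner_def mvec_def by (simp add: sum_distrib_right)
  also have "\<dots> = (\<Sum>j<n. \<Sum>i<n. cnj (M i j) * cnj (a j) * b i)" by (rule sum.swap)
  also have "\<dots> = (\<Sum>j<n. \<Sum>i<n. cnj (a j) * (M j i * b i))"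
  proof (intro sum.cong refl)
    fix j i assume "j \<in> {..<n}" "i \<in> {..<n}"
    then have "M j i = cnj (M i j)" using assms unfolding hermitian_fun_def by blast
    then show "cnj (M i j) * cnj (a j) * b i = cnj (a j) * (M j i * b i)" by simp
  qed
  also have "\<dots> = cinner n a (mvec n M b)"
    unfolding cinner_def mvec_def by (simp add: sum_distrib_left)
  finally show ?thesis .
qed

lemma cinner_mvec_self_real:
  assumes "hermitian_fun n M"
  shows "cinner n y (mvec n M y) = of_real (Re (cinner n y (mvec n M y)))"
proof -
  have "cinner n y (mvec n M y) = cinner n (mvec n M y) y"
    using cinner_mvec_hermitian[OF assms] by simp
  also have "\<dots> = cnj (cinner n y (mvec n M y))" by (rule cinner_commute)
  finally have "Im (cinner n y (mvec n M y)) = Im (cnj (cinner n y (mvec n M y)))" by (rule arg_cong)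
  then show ?thesis by (simp add: complex_eq_iff)
qed

lemma hermitian_fun_kdelta: "hermitian_fun n kdelta"
  unfolding hermitian_fun_def kdelta_def by simp

lemma cinner_mvec_kdelta: "cinner n a (mvec n kdelta b) = cinner n a b"
  by (intro cinner_cong refl mvec_kdelta)

lemma psd_fun_kdelta: "psd_fun n kdelta"
  unfolding psd_fun_def cinner_mvec_kdelta using hermitian_fun_kdelta Re_cinner_self_nonneg by blast

section \<open>Positive semidefinite forms\<close>

lemma discriminant_le_of_quadratic_nonneg:
  fixes F G :: real and S :: complex
  assumes G: "0 \<le> G" and nonneg: "\<And>l. 0 \<le> F - 2 * Re (l * S) + (cmod l)\<^sup>2 * G"
  shows "(cmod S)\<^sup>2 \<le> F * G"
proof -
  have SS: "cnj S * S = of_real ((cmod S)\<^sup>2)" using complex_norm_square[of S] by (simp add: mult.commute)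
  show ?thesis
  proof (cases "G = 0")
    case False
    then have Gp: "0 < G" using G by simp
    have "0 \<le> F - 2 * Re (cnj S / of_real G * S) + (cmod (cnj S / of_real G))\<^sup>2 * G" by (rule nonneg)
    moreover have "Re (cnj S / of_real G * S) = (cmod S)\<^sup>2 / G"
      using SS by (simp add: mult.commute[of _ S] mult.assoc[symmetric])
    moreover have "(cmod (cnj S / of_real G))\<^sup>2 * G = (cmod S)\<^sup>2 / G"
      using Gp by (simp add: norm_divide power_divide power2_eq_square)
    ultimately have "(cmod S)\<^sup>2 / G \<le> F" by linarith
    then show ?thesis using Gp by (simp add: field_simps)
  next
    case True
    have "S = 0"
    proof (rule ccontr)
      assume "S \<noteq> 0"
      then have pos: "0 < (cmod S)\<^sup>2" by simp
      define t where "t = (F + 1) / (2 * (cmod S)\<^sup>2)"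
      have "0 \<le> F - 2 * Re (of_real t * cnj S * S)" using nonneg[of "of_real t * cnj S"] True by simp
      moreover have "Re (of_real t * cnj S * S) = t * (cmod S)\<^sup>2" using SS by (simp add: mult.assoc)
      moreover have "2 * t * (cmod S)\<^sup>2 = F + 1" unfolding t_def using pos by simp
      ultimately show False by simp
    qed
    then show ?thesis using True by simp
  qed
qed

lemma psd_cauchy_schwarz:
  assumes "psd_fun n M"
  shows "(cmod (cinner n a (mvec n M b)))\<^sup>2
    \<le> Re (cinner n a (mvec n M a)) * Re (cinner n b (mvec n M b))"
proof -
  have herm: "hermitian_fun n M" and psd: "\<And>y. 0 \<le> Re (cinner n y (mvec n M y))"
    using assms unfolding psd_fun_def by auto
  define F where "F = Re (cinner n a (mvec n M a))"
  define G where "G = Re (cinner n b (mvec n M b))"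
  define S where "S = cinner n a (mvec n M b)"
  have Fr: "cinner n a (mvec n M a) = of_real F"
    unfolding F_def by (rule cinner_mvec_self_real[OF herm])
  have Gr: "cinner n b (mvec n M b) = of_real G"
    unfolding G_def by (rule cinner_mvec_self_real[OF herm])
  have "cinner n b (mvec n M a) = cinner n (mvec n M b) a"
    using cinner_mvec_hermitian[OF herm] by simp
  also have "\<dots> = cnj S" unfolding S_def by (rule cinner_commute)
  finally have Sba: "cinner n b (mvec n M a) = cnj S" .
  have "0 \<le> F - 2 * Re (l * S) + (cmod l)\<^sup>2 * G" for l
  proof -
    have "Re (cinner n (\<lambda>i. a i - l * b i) (mvec n M (\<lambda>i. a i - l * b i)))
        = F - 2 * Re (l * S) + (cmod l)\<^sup>2 * G"
      unfolding mvec_diff_scale cinner_diff_scale Sba S_def[symmetric] Fr Gr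
      by (simp add: complex_norm_square[symmetric] mult.commute)
    then show ?thesis using psd by metis
  qed
  moreover have "0 \<le> G" unfolding G_def using psd .
  ultimately show ?thesis unfolding S_def F_def[symmetric] G_def[symmetric]
    by (rule discriminant_le_of_quadratic_nonneg[rotated])
qed

lemma cauchy_schwarz_cinner: "(cmod (cinner n a b))\<^sup>2 \<le> Re (cinner n a a) * Re (cinner n b b)"
  using psd_cauchy_schwarz[OF psd_fun_kdelta, of n a b] unfolding cinner_mvec_kdelta .

lemma mvec_kdelta_right: "j < n \<Longrightarrow> mvec n M (kdelta j) i = M i j"
  unfolding mvec_def kdelta_commute[of j] by (rule sum_kdelta_right)

lemma psd_diag_nonneg:
  assumes "psd_fun n M" "j < n"
  shows "0 \<le> Re (M j j)"
proof -
  have "0 \<le> Re (cinner n (kdelta j) (mvec n M (kdelta j)))"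
    using assms(1) unfolding psd_fun_def by blast
  then show ?thesis using assms(2) by (simp add: cinner_kdelta_left mvec_kdelta_right)
qed

lemma psd_norm_mvec_le:
  assumes "psd_fun n M"
  shows "Re (cinner n (mvec n M u) (mvec n M u)) \<le> Re (\<Sum>j<n. M j j) * Re (cinner n u (mvec n M u))"
proof -
  have "Re (cinner n (mvec n M u) (mvec n M u)) = (\<Sum>j<n. (cmod (mvec n M u j))\<^sup>2)"
    by (rule Re_cinner_self)
  also have "\<dots> \<le> (\<Sum>j<n. Re (M j j) * Re (cinner n u (mvec n M u)))"
  proof (rule sum_mono)
    fix j assume "j \<in> {..<n}"
    then show "(cmod (mvec n M u j))\<^sup>2 \<le> Re (M j j) * Re (cinner n u (mvec n M u))"
      using psd_cauchy_schwarz[OF assms, of "kdelta j" u]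
      by (simp add: cinner_kdelta_left mvec_kdelta_right)
  qed
  also have "\<dots> = Re (\<Sum>j<n. M j j) * Re (cinner n u (mvec n M u))"
    unfolding Re_sum sum_distrib_right ..
  finally show ?thesis .
qed

lemma psd_quadratic_le_trace:
  assumes "psd_fun n M"
  shows "Re (cinner n u (mvec n M u)) \<le> Re (\<Sum>j<n. M j j) * Re (cinner n u u)"
proof -
  define F where "F = Re (cinner n u (mvec n M u))"
  define t where "t = Re (\<Sum>j<n. M j j)"
  have F0: "0 \<le> F" using assms unfolding F_def psd_fun_def by blast
  have t0: "0 \<le> t" unfolding t_def Re_sum by (rule sum_nonneg) (simp add: psd_diag_nonneg[OF assms])
  have "F\<^sup>2 \<le> (cmod (cinner n u (mvec n M u)))\<^sup>2"
    using F0 unfolding F_def by (intro power_mono complex_Re_le_cmod)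
  also have "\<dots> \<le> Re (cinner n u u) * Re (cinner n (mvec n M u) (mvec n M u))"
    by (rule cauchy_schwarz_cinner)
  also have "\<dots> \<le> Re (cinner n u u) * (t * F)"
    using psd_norm_mvec_le[OF assms] Re_cinner_self_nonneg unfolding F_def t_def by (rule mult_left_mono)
  finally have "F * F \<le> (t * Re (cinner n u u)) * F" by (simp add: power2_eq_square mult_ac)
  then have "F \<le> t * Re (cinner n u u)"
    using F0 t0 Re_cinner_self_nonneg[of n u]
    by (cases "F = 0") (simp_all add: mult_le_cancel_right)
  then show ?thesis unfolding F_def t_def .
qed

definition max_rayleigh :: "nat \<Rightarrow> (nat \<Rightarrow> nat \<Rightarrow> complex) \<Rightarrow> real" where
  "max_rayleigh n M = Sup {Re (cinner n y (mvec n M y)) | y. Re (cinner n y y) = 1}"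

lemma Re_cinner_kdelta_self: "i < n \<Longrightarrow> Re (cinner n (kdelta i) (kdelta i)) = 1"
  by (simp add: cinner_kdelta_left kdelta_def)

lemma quadratic_le_max_rayleigh:
  assumes "psd_fun n M"
  shows "Re (cinner n y (mvec n M y)) \<le> max_rayleigh n M * Re (cinner n y y)"
proof (cases "Re (cinner n y y) = 0")
  case True
  have "cinner n y (mvec n M y) = 0"
    unfolding cinner_def using Re_cinner_self_eq_0[OF True] by (intro sum.neutral) simp
  then show ?thesis using True by simp
next
  case False
  define s where "s = Re (cinner n y y)"
  have s: "s > 0" using False Re_cinner_self_nonneg[of n y] unfolding s_def by simp
  define k where "k = complex_of_real (1 / sqrt s)"
  have "cnj k * k = of_real (1 / sqrt s * (1 / sqrt s))"
    by (simp only: k_def complex_cnj_complex_of_real of_real_mult)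
  also have "1 / sqrt s * (1 / sqrt s) = 1 / s"
    using s by (simp add: field_simps)
  finally have kk: "cnj k * k = of_real (1 / s)" .
  have "Re (cinner n (\<lambda>i. k * y i) (\<lambda>i. k * y i)) = 1"
    unfolding cinner_scale kk using s by (subst cinner_self_real) (simp add: s_def[symmetric])
  then have "Re (cinner n (\<lambda>i. k * y i) (mvec n M (\<lambda>i. k * y i)))
      \<in> {Re (cinner n y (mvec n M y)) | y. Re (cinner n y y) = 1}"
    by blast
  moreover have "bdd_above {Re (cinner n y (mvec n M y)) | y. Re (cinner n y y) = 1}"
  proof (rule bdd_aboveI)
    fix x assume "x \<in> {Re (cinner n y (mvec n M y)) | y. Re (cinner n y y) = 1}"
    then obtain z where "x = Re (cinner n z (mvec n M z))" "Re (cinner n z z) = 1" by blast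
    then show "x \<le> Re (\<Sum>j<n. M j j)" using psd_quadratic_le_trace[OF assms, of z] by simp
  qed
  ultimately have "Re (cinner n (\<lambda>i. k * y i) (mvec n M (\<lambda>i. k * y i))) \<le> max_rayleigh n M"
    unfolding max_rayleigh_def by (rule cSup_upper)
  moreover have "Re (cinner n (\<lambda>i. k * y i) (mvec n M (\<lambda>i. k * y i))) = Re (cinner n y (mvec n M y)) / s"
    unfolding mvec_scale cinner_scale kk by simp
  ultimately show ?thesis using s unfolding s_def[symmetric] by (simp add: field_simps)
qed

lemma max_rayleigh_le:
  assumes "0 < n" and "\<And>y. Re (cinner n y y) = 1 \<Longrightarrow> Re (cinner n y (mvec n M y)) \<le> b"
  shows "max_rayleigh n M \<le> b"
  unfolding max_rayleigh_def
  using assms Re_cinner_kdelta_self[OF assms(1)] by (intro cSup_least) auto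

lemma cinner_mvec_shift:
  "cinner n y (mvec n (\<lambda>i j. M i j - c * kdelta i j) y) = cinner n y (mvec n M y) - c * cinner n y y"
proof -
  have "mvec n (\<lambda>i j. M i j - c * kdelta i j) y i = mvec n M y i - c * y i" if "i < n" for i
  proof -
    have "mvec n (\<lambda>i j. M i j - c * kdelta i j) y i = mvec n M y i - c * (\<Sum>j<n. kdelta i j * y j)"
      unfolding mvec_def by (simp add: algebra_simps sum_subtractf sum_distrib_left)
    then show ?thesis using sum_kdelta_left[OF that] by simp
  qed
  then have "cinner n y (mvec n (\<lambda>i j. M i j - c * kdelta i j) y) = cinner n y (\<lambda>i. mvec n M y i - c * y i)"
    by (intro cinner_cong) auto
  then show ?thesis by (simp add: cinner_diff_right cinner_scale_right)
qed

lemma max_rayleigh_plus_le_trace: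
  assumes psd: "psd_fun n M" and n: "0 < n"
    and lower: "\<And>y. m * Re (cinner n y y) \<le> Re (cinner n y (mvec n M y))"
  shows "max_rayleigh n M + (real n - 1) * m \<le> Re (\<Sum>j<n. M j j)"
proof -
  define M' where "M' i j = M i j - of_real m * kdelta i j" for i j
  have quad': "Re (cinner n y (mvec n M' y)) = Re (cinner n y (mvec n M y)) - m * Re (cinner n y y)" for y
    unfolding M'_def cinner_mvec_shift by simp
  have "hermitian_fun n M'" unfolding hermitian_fun_def
  proof (intro allI impI)
    fix i j assume "i < n" "j < n"
    then have "M j i = cnj (M i j)" using psd unfolding psd_fun_def hermitian_fun_def by blast
    then show "M' j i = cnj (M' i j)" unfolding M'_def by (simp add: kdelta_commute cnj_kdelta)
  qed
  moreover have "0 \<le> Re (cinner n y (mvec n M' y))" for y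
    unfolding quad' using lower by simp
  ultimately have psd': "psd_fun n M'" unfolding psd_fun_def by blast
  have tr': "Re (\<Sum>j<n. M' j j) = Re (\<Sum>j<n. M j j) - real n * m"
    unfolding M'_def kdelta_def by (simp add: sum_subtractf Re_sum)
  have "max_rayleigh n M \<le> Re (\<Sum>j<n. M j j) - (real n - 1) * m"
  proof (rule max_rayleigh_le[OF n])
    fix y assume y: "Re (cinner n y y) = 1"
    have "Re (cinner n y (mvec n M' y)) \<le> Re (\<Sum>j<n. M' j j)"
      using psd_quadratic_le_trace[OF psd', of y] y by simp
    then show "Re (cinner n y (mvec n M y)) \<le> Re (\<Sum>j<n. M j j) - (real n - 1) * m"
      unfolding quad' tr' y by (simp add: algebra_simps)
  qed
  then show ?thesis by simp
qed

lemma trace_ge_of_max_rayleigh_bound: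
  assumes psd: "psd_fun n M" and n: "0 < n" and c: "0 < c"
    and t: "0 < Re (\<Sum>j<n. M j j)"
    and bound: "\<And>x. c * Re (\<Sum>j<n. M j j) * Re (cinner n x x) \<le> max_rayleigh n M * Re (cinner n x (mvec n M x))"
  shows "4 * (real n - 1) * c \<le> Re (\<Sum>j<n. M j j)"
proof -
  define t where "t = Re (\<Sum>j<n. M j j)"
  define lmax where "lmax = max_rayleigh n M"
  have "0 < lmax"
  proof (rule ccontr)
    assume "\<not> 0 < lmax"
    moreover have "0 \<le> Re (cinner n (kdelta 0) (mvec n M (kdelta 0)))"
      using psd unfolding psd_fun_def by blast
    ultimately have "lmax * Re (cinner n (kdelta 0) (mvec n M (kdelta 0))) \<le> 0"
      by (simp add: mult_nonpos_nonneg)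
    moreover have "0 < c * t * Re (cinner n (kdelta 0) (kdelta 0))"
      using c t n unfolding t_def by (simp add: Re_cinner_kdelta_self)
    ultimately show False using bound[of "kdelta 0"] unfolding t_def lmax_def by simp
  qed
  have "lmax + (real n - 1) * (c * t / lmax) \<le> t"
    unfolding lmax_def t_def
  proof (rule max_rayleigh_plus_le_trace[OF psd n])
    fix y
    show "c * Re (\<Sum>j<n. M j j) / max_rayleigh n M * Re (cinner n y y) \<le> Re (cinner n y (mvec n M y))"
      using bound[of y] \<open>0 < lmax\<close> unfolding lmax_def by (simp add: field_simps)
  qed
  then have "(real n - 1) * c * t \<le> t * lmax - lmax * lmax"
    using \<open>0 < lmax\<close> by (simp add: field_simps)
  also have "\<dots> \<le> t * t / 4"
    using zero_le_power2[of "t - 2 * lmax"] by (simp add: power2_eq_square algebra_simps)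
  finally have "(4 * (real n - 1) * c) * t \<le> t * t" by (simp add: algebra_simps)
  then show ?thesis using t unfolding t_def by (simp add: mult_le_cancel_right)
qed

section \<open>Two projections related by the Q-relation\<close>

definition projection_fun :: "nat \<Rightarrow> (nat \<Rightarrow> nat \<Rightarrow> complex) \<Rightarrow> bool" where
  "projection_fun n M \<longleftrightarrow> hermitian_fun n M \<and> (\<forall>i<n. \<forall>j<n. mmult n M M i j = M i j)"

definition q_relation ::
    "nat \<Rightarrow> real \<Rightarrow> (nat \<Rightarrow> nat \<Rightarrow> complex) \<Rightarrow> (nat \<Rightarrow> nat \<Rightarrow> complex) \<Rightarrow> bool" where
  "q_relation n Q A B \<longleftrightarrow> (\<forall>i<n. \<forall>j<n.
     complex_of_real (Q\<^sup>2) * (mmult n (mmult n A B) A i j - mmult n (mmult n B A) B i j)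
       = A i j - B i j)"

lemma projection_fun_complement:
  assumes "projection_fun n M"
  shows "projection_fun n (\<lambda>i j. kdelta i j - M i j)"
  unfolding projection_fun_def hermitian_fun_def
proof (intro conjI allI impI)
  fix i j assume ij: "i < n" "j < n"
  then have "M j i = cnj (M i j)" using assms unfolding projection_fun_def hermitian_fun_def by blast
  then show "kdelta j i - M j i = cnj (kdelta i j - M i j)" by (simp add: kdelta_commute cnj_kdelta)
  have "mmult n M M i j = M i j" using assms ij unfolding projection_fun_def by blast
  then show "mmult n (\<lambda>i j. kdelta i j - M i j) (\<lambda>i j. kdelta i j - M i j) i j = kdelta i j - M i j"
    using ij by (simp add: mmult_diff_left mmult_diff_right mmult_kdelta_left mmult_kdelta_right)
qed

lemma mmult_complement_complement:
  assumes "i < n" "j < n"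
  shows "mmult n (\<lambda>i j. kdelta i j - A i j) (\<lambda>i j. kdelta i j - B i j) i j
    = kdelta i j - A i j - B i j + mmult n A B i j"
  using assms by (simp add: mmult_diff_left mmult_diff_right mmult_kdelta_left mmult_kdelta_right)

lemma mmult_sandwich_complement:
  assumes ij: "i < n" "j < n" and idem: "mmult n A A i j = A i j"
  shows "mmult n (mmult n (\<lambda>i j. kdelta i j - A i j) (\<lambda>i j. kdelta i j - B i j)) (\<lambda>i j. kdelta i j - A i j) i j
    = kdelta i j - A i j - B i j + mmult n A B i j + mmult n B A i j - mmult n (mmult n A B) A i j"
proof -
  have "mmult n (mmult n (\<lambda>i j. kdelta i j - A i j) (\<lambda>i j. kdelta i j - B i j)) (\<lambda>i j. kdelta i j - A i j) i j
      = mmult n (\<lambda>i j. kdelta i j - A i j - B i j + mmult n A B i j) (\<lambda>i j. kdelta i j - A i j) i j"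
    using ij by (intro mmult_cong mmult_complement_complement) auto
  also have "\<dots> = kdelta i j - A i j - B i j + mmult n A B i j + mmult n B A i j - mmult n (mmult n A B) A i j"
    using ij idem
    by (simp add: mmult_add_left mmult_diff_left mmult_diff_right mmult_kdelta_left mmult_kdelta_right)
  finally show ?thesis .
qed

lemma q_relation_complement:
  assumes A: "projection_fun n A" and B: "projection_fun n B" and rel: "q_relation n Q A B"
  shows "q_relation n Q (\<lambda>i j. kdelta i j - A i j) (\<lambda>i j. kdelta i j - B i j)"
  unfolding q_relation_def
proof (intro allI impI)
  fix i j assume ij: "i < n" "j < n"
  then have "mmult n A A i j = A i j" "mmult n B B i j = B i j"
    using A B unfolding projection_fun_def by blast+
  moreover have "complex_of_real (Q\<^sup>2) * (mmult n (mmult n A B) A i j - mmult n (mmult n B A) B i j)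
      = A i j - B i j"
    using rel ij unfolding q_relation_def by blast
  ultimately show "complex_of_real (Q\<^sup>2) *
      (mmult n (mmult n (\<lambda>i j. kdelta i j - A i j) (\<lambda>i j. kdelta i j - B i j)) (\<lambda>i j. kdelta i j - A i j) i j
       - mmult n (mmult n (\<lambda>i j. kdelta i j - B i j) (\<lambda>i j. kdelta i j - A i j)) (\<lambda>i j. kdelta i j - B i j) i j)
      = (kdelta i j - A i j) - (kdelta i j - B i j)"
    using ij by (simp add: mmult_sandwich_complement algebra_simps)
qed

lemma mvec_projection_idem:
  assumes "projection_fun n M" "i < n"
  shows "mvec n M (mvec n M w) i = mvec n M w i"
proof -
  have "mvec n M (mvec n M w) i = mvec n (mmult n M M) w i" by (simp add: mvec_mmult)
  also have "\<dots> = mvec n M w i"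
    using assms unfolding projection_fun_def by (intro mvec_cong_mat) auto
  finally show ?thesis .
qed

lemma cinner_mvec_projection:
  assumes "projection_fun n M"
  shows "cinner n v (mvec n M v) = cinner n (mvec n M v) (mvec n M v)"
proof -
  have "cinner n (mvec n M v) (mvec n M v) = cinner n v (mvec n M (mvec n M v))"
    using assms unfolding projection_fun_def by (simp add: cinner_mvec_hermitian)
  also have "\<dots> = cinner n v (mvec n M v)"
    using assms by (intro cinner_cong refl mvec_projection_idem)
  finally show ?thesis by simp
qed

lemma cinner_mvec_sandwich:
  assumes "hermitian_fun n A"
  shows "cinner n v (mvec n (mmult n (mmult n A B) A) v) = cinner n (mvec n A v) (mvec n B (mvec n A v))"
  using assms by (simp add: mvec_mmult cinner_mvec_hermitian)

lemma q_relation_cinner: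
  assumes "q_relation n Q A B"
  shows "complex_of_real (Q\<^sup>2) * (cinner n v (mvec n (mmult n (mmult n A B) A) v)
      - cinner n v (mvec n (mmult n (mmult n B A) B) v))
    = cinner n v (mvec n A v) - cinner n v (mvec n B v)"
proof -
  let ?X = "mmult n (mmult n A B) A" and ?Y = "mmult n (mmult n B A) B"
  have "complex_of_real (Q\<^sup>2) * (mvec n ?X v i - mvec n ?Y v i) = mvec n A v i - mvec n B v i"
    if "i < n" for i
  proof -
    have "complex_of_real (Q\<^sup>2) * (mvec n ?X v i - mvec n ?Y v i)
        = (\<Sum>j<n. complex_of_real (Q\<^sup>2) * (?X i j - ?Y i j) * v j)"
      unfolding mvec_def by (simp add: algebra_simps sum_subtractf sum_distrib_left)
    also have "\<dots> = (\<Sum>j<n. (A i j - B i j) * v j)"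
      using assms that unfolding q_relation_def by (intro sum.cong) auto
    also have "\<dots> = mvec n A v i - mvec n B v i"
      unfolding mvec_def by (simp add: algebra_simps sum_subtractf)
    finally show ?thesis .
  qed
  then have "cinner n v (\<lambda>i. complex_of_real (Q\<^sup>2) * (mvec n ?X v i - mvec n ?Y v i))
      = cinner n v (\<lambda>i. mvec n A v i - mvec n B v i)"
    by (intro cinner_cong) auto
  then show ?thesis by (simp add: cinner_scale_right cinner_diff_right)
qed

lemma min_one_inverse_square_mult_le:
  fixes S P q Q :: real
  assumes "0 \<le> S" "0 \<le> P" "0 < Q" "Q\<^sup>2 * (P - q) = S - P" "P\<^sup>2 \<le> S * q"
  shows "min 1 (1 / Q\<^sup>2) * S \<le> P"
proof (cases "S \<le> P")
  case True
  have "min 1 (1 / Q\<^sup>2) * S \<le> 1 * S" using assms(1) by (intro mult_right_mono) auto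
  then show ?thesis using True by simp
next
  case False
  then have SP: "S - P > 0" and S0: "S > 0" using assms by auto
  have "P\<^sup>2 / S \<le> q" using assms(5) S0 by (simp add: field_simps)
  then have "S - P \<le> Q\<^sup>2 * (P - P\<^sup>2 / S)"
    unfolding assms(4)[symmetric] using assms(3) by (intro mult_left_mono) auto
  also have "P - P\<^sup>2 / S = P * (S - P) / S" using S0 by (simp add: field_simps power2_eq_square)
  finally have "S * (S - P) \<le> Q\<^sup>2 * P * (S - P)" using S0 by (simp add: field_simps)
  then have "S \<le> Q\<^sup>2 * P" using SP by (simp add: mult_le_cancel_right_pos)
  then have "S / Q\<^sup>2 \<le> P" using assms(3) by (simp add: field_simps)
  moreover have "min 1 (1 / Q\<^sup>2) * S \<le> (1 / Q\<^sup>2) * S" using assms(1) by (intro mult_right_mono) auto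
  ultimately show ?thesis by simp
qed

lemma q_relation_range_bound:
  assumes A: "projection_fun n A" and B: "projection_fun n B" and rel: "q_relation n Q A B"
    and Q: "0 < Q" and v: "\<And>i. i < n \<Longrightarrow> mvec n A v i = v i"
  shows "min 1 (1 / Q\<^sup>2) * Re (cinner n v v) \<le> Re (cinner n v (mvec n B v))"
proof -
  have hA: "hermitian_fun n A" and hB: "hermitian_fun n B"
    using A B unfolding projection_fun_def by auto
  define w where "w = mvec n B v"
  define u where "u = mvec n A w"
  have Av: "cinner n (mvec n A v) x = cinner n v x" for x by (intro cinner_cong refl v)
  have "cinner n v (mvec n (mmult n (mmult n A B) A) v) = cinner n v w"
    unfolding cinner_mvec_sandwich[OF hA] Av w_def by (intro cinner_cong refl mvec_cong v)
  moreover have "cinner n v (mvec n (mmult n (mmult n B A) B) v) = cinner n u u"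
    unfolding cinner_mvec_sandwich[OF hB] u_def w_def by (rule cinner_mvec_projection[OF A])
  moreover have "cinner n v (mvec n A v) = cinner n v v"
    using Av cinner_mvec_hermitian[OF hA] by simp
  ultimately have main: "complex_of_real (Q\<^sup>2) * (cinner n v w - cinner n u u) = cinner n v v - cinner n v w"
    using q_relation_cinner[OF rel, of v] unfolding w_def by simp
  have vw: "cinner n v w = cinner n w w" unfolding w_def by (rule cinner_mvec_projection[OF B])
  have vu: "cinner n v u = cinner n v w"
    unfolding u_def using Av cinner_mvec_hermitian[OF hA] by metis
  define S where "S = Re (cinner n v v)"
  define P where "P = Re (cinner n v w)"
  define q where "q = Re (cinner n u u)"
  have Pr: "cinner n v w = of_real P" unfolding P_def vw by (rule cinner_self_real)
  have "Q\<^sup>2 * (P - q) = S - P"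
    using arg_cong[OF main, of Re] unfolding Pr S_def q_def by simp
  moreover have "P\<^sup>2 \<le> S * q"
    using cauchy_schwarz_cinner[of n v u] unfolding vu Pr S_def q_def by simp
  moreover have "0 \<le> P" unfolding P_def vw by (rule Re_cinner_self_nonneg)
  ultimately have "min 1 (1 / Q\<^sup>2) * S \<le> P"
    using min_one_inverse_square_mult_le Q Re_cinner_self_nonneg unfolding S_def by blast
  then show ?thesis unfolding S_def P_def w_def .
qed

lemma sum_lessThan_add:
  fixes a b :: nat
  shows "(\<Sum>c<a + b. f c) = (\<Sum>c<a. f c) + (\<Sum>j<b. f (a + j))"
  by (induction b) (simp_all add: add.assoc)

lemma sum_lessThan_mult:
  fixes m n :: nat
  shows "(\<Sum>c<m * n. f c) = (\<Sum>i<m. \<Sum>j<n. f (i * n + j))"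
proof (induction m)
  case (Suc m)
  have "(\<Sum>c<Suc m * n. f c) = (\<Sum>c<m * n. f c) + (\<Sum>j<n. f (m * n + j))"
    using sum_lessThan_add[of f "m * n" n] by (simp add: add.commute)
  then show ?case using Suc by simp
qed simp

lemma sum_lessThan_cube_left:
  fixes n :: nat
  shows "(\<Sum>a<n * n * n. f a) = (\<Sum>m<n * n. \<Sum>l<n. f (m * n + l))"
  by (rule sum_lessThan_mult)

lemma sum_lessThan_cube_right:
  fixes n :: nat
  shows "(\<Sum>a<n * n * n. f a) = (\<Sum>i<n. \<Sum>s<n * n. f (i * (n * n) + s))"
  using sum_lessThan_mult[of f n "n * n"] by (simp add: mult.assoc)

lemma sum_rotate3:
  "(\<Sum>a\<in>A. \<Sum>b\<in>B. \<Sum>c\<in>C. f a b c) = (\<Sum>b\<in>B. \<Sum>c\<in>C. \<Sum>a\<in>A. f a b c)"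
  by (subst sum.swap) (intro sum.cong refl sum.swap)

lemma sum_rotate4:
  "(\<Sum>a\<in>A. \<Sum>b\<in>B. \<Sum>c\<in>C. \<Sum>d\<in>D. f a b c d) = (\<Sum>b\<in>B. \<Sum>c\<in>C. \<Sum>d\<in>D. \<Sum>a\<in>A. f a b c d)"
  by (subst sum.swap) (intro sum.cong refl sum_rotate3)

lemma div_mod_mult_add:
  fixes i k r :: nat
  assumes "r < k"
  shows "(i * k + r) div k = i" and "(i * k + r) mod k = r"
  using assms by simp_all

lemma index_pair_less:
  assumes "i < m" "j < (n::nat)"
  shows "i * n + j < m * n"
proof -
  have "i * n + j < (i + 1) * n" using assms(2) by simp
  also have "\<dots> \<le> m * n" using assms(1) by (intro mult_right_mono) auto
  finally show ?thesis .
qed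

(* With e_i (x) e_j (x) e_l at index (i * n + j) * n + l, as for kron, tensor_left n p is
   P (x) I and tensor_right n p is I (x) P. *)
definition tensor_left :: "nat \<Rightarrow> (nat \<Rightarrow> nat \<Rightarrow> complex) \<Rightarrow> nat \<Rightarrow> nat \<Rightarrow> complex" where
  "tensor_left n p a b = p (a div n) (b div n) * kdelta (a mod n) (b mod n)"

definition tensor_right :: "nat \<Rightarrow> (nat \<Rightarrow> nat \<Rightarrow> complex) \<Rightarrow> nat \<Rightarrow> nat \<Rightarrow> complex" where
  "tensor_right n p a b = kdelta (a div (n * n)) (b div (n * n)) * p (a mod (n * n)) (b mod (n * n))"

lemma kdelta_div_mod:
  assumes "0 < (n::nat)"
  shows "kdelta (a div n) (b div n) * kdelta (a mod n) (b mod n) = kdelta a b"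
proof -
  have "(a div n = b div n \<and> a mod n = b mod n) \<longleftrightarrow> a = b" by (metis div_mult_mod_eq)
  then show ?thesis unfolding kdelta_def by auto
qed

lemma tensor_left_complement:
  "0 < n \<Longrightarrow> tensor_left n (\<lambda>i j. kdelta i j - p i j) = (\<lambda>a b. kdelta a b - tensor_left n p a b)"
  unfolding tensor_left_def by (simp add: left_diff_distrib kdelta_div_mod)

lemma tensor_right_complement:
  "0 < n \<Longrightarrow> tensor_right n (\<lambda>i j. kdelta i j - p i j) = (\<lambda>a b. kdelta a b - tensor_right n p a b)"
  unfolding tensor_right_def by (simp add: right_diff_distrib kdelta_div_mod mult.commute)

lemma mvec_tensor_left:
  assumes a: "a < n * n * n"
  shows "mvec (n * n * n) (tensor_left n p) (\<lambda>b. q (b div n) * x (b mod n)) a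
    = (\<Sum>m<n * n. p (a div n) m * q m) * x (a mod n)"
proof -
  have "0 < n" using a by (cases n) auto
  then have am: "a mod n < n" by simp
  have "mvec (n * n * n) (tensor_left n p) (\<lambda>b. q (b div n) * x (b mod n)) a
      = (\<Sum>m<n * n. \<Sum>l<n. tensor_left n p a (m * n + l) * (q m * x l))"
    unfolding mvec_def sum_lessThan_cube_left by (intro sum.cong refl) simp
  also have "\<dots> = (\<Sum>m<n * n. \<Sum>l<n. kdelta (a mod n) l * (p (a div n) m * q m * x l))"
    unfolding tensor_left_def by (intro sum.cong refl) (simp add: mult_ac)
  also have "\<dots> = (\<Sum>m<n * n. p (a div n) m * q m * x (a mod n))"
    using am by (simp add: sum_kdelta_left)
  finally show ?thesis by (simp add: sum_distrib_right)
qed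

lemma mvec_tensor_right:
  assumes a: "a < n * n * n"
  shows "mvec (n * n * n) (tensor_right n p) v a
    = (\<Sum>r<n * n. p (a mod (n * n)) r * v (a div (n * n) * (n * n) + r))"
proof -
  have ad: "a div (n * n) < n" using a by (simp add: less_mult_imp_div_less mult.assoc)
  have "mvec (n * n * n) (tensor_right n p) v a
      = (\<Sum>i<n. \<Sum>r<n * n. tensor_right n p a (i * (n * n) + r) * v (i * (n * n) + r))"
    unfolding mvec_def sum_lessThan_cube_right ..
  also have "\<dots> = (\<Sum>i<n. kdelta (a div (n * n)) i * (\<Sum>r<n * n. p (a mod (n * n)) r * v (i * (n * n) + r)))"
    unfolding tensor_right_def by (intro sum.cong refl) (simp add: sum_distrib_left mult_ac)
  also have "\<dots> = (\<Sum>r<n * n. p (a mod (n * n)) r * v (a div (n * n) * (n * n) + r))"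
    using ad by (rule sum_kdelta_left)
  finally show ?thesis .
qed

lemma projection_fun_tensor_left:
  assumes p: "projection_fun (n * n) p"
  shows "projection_fun (n * n * n) (tensor_left n p)"
  unfolding projection_fun_def hermitian_fun_def
proof (intro conjI allI impI)
  fix a b assume a: "a < n * n * n" and b: "b < n * n * n"
  then have ab: "a div n < n * n" "b div n < n * n" by (simp_all add: less_mult_imp_div_less)
  then have "p (b div n) (a div n) = cnj (p (a div n) (b div n))"
    using p unfolding projection_fun_def hermitian_fun_def by blast
  then show "tensor_left n p b a = cnj (tensor_left n p a b)"
    unfolding tensor_left_def by (simp add: cnj_kdelta kdelta_commute)
  have "mmult (n * n * n) (tensor_left n p) (tensor_left n p) a b
      = mvec (n * n * n) (tensor_left n p) (\<lambda>c. p (c div n) (b div n) * kdelta (c mod n) (b mod n)) a"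
    unfolding mmult_def mvec_def tensor_left_def[of n p _ b] ..
  also have "\<dots> = (\<Sum>m<n * n. p (a div n) m * p m (b div n)) * kdelta (a mod n) (b mod n)"
    by (rule mvec_tensor_left[OF a])
  also have "\<dots> = tensor_left n p a b"
    using p ab unfolding projection_fun_def mmult_def tensor_left_def by simp
  finally show "mmult (n * n * n) (tensor_left n p) (tensor_left n p) a b = tensor_left n p a b" .
qed

lemma projection_fun_tensor_right:
  assumes p: "projection_fun (n * n) p"
  shows "projection_fun (n * n * n) (tensor_right n p)"
  unfolding projection_fun_def hermitian_fun_def
proof (intro conjI allI impI)
  fix a b assume a: "a < n * n * n" and b: "b < n * n * n"
  then have "0 < n" by (cases n) auto
  then have ab: "a mod (n * n) < n * n" "b mod (n * n) < n * n" by simp_all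
  then have "p (b mod (n * n)) (a mod (n * n)) = cnj (p (a mod (n * n)) (b mod (n * n)))"
    using p unfolding projection_fun_def hermitian_fun_def by blast
  then show "tensor_right n p b a = cnj (tensor_right n p a b)"
    unfolding tensor_right_def by (simp add: cnj_kdelta kdelta_commute)
  have "mmult (n * n * n) (tensor_right n p) (tensor_right n p) a b
      = mvec (n * n * n) (tensor_right n p) (\<lambda>c. tensor_right n p c b) a"
    unfolding mmult_def mvec_def ..
  also have "\<dots> = (\<Sum>r<n * n. p (a mod (n * n)) r * tensor_right n p (a div (n * n) * (n * n) + r) b)"
    by (rule mvec_tensor_right[OF a])
  also have "\<dots> = kdelta (a div (n * n)) (b div (n * n)) * (\<Sum>r<n * n. p (a mod (n * n)) r * p r (b mod (n * n)))"
  proof -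
    have "tensor_right n p (a div (n * n) * (n * n) + r) b = kdelta (a div (n * n)) (b div (n * n)) * p r (b mod (n * n))"
      if "r < n * n" for r
      using that unfolding tensor_right_def by (simp add: div_mod_mult_add)
    then show ?thesis unfolding sum_distrib_left by (intro sum.cong refl) (simp add: mult_ac)
  qed
  also have "\<dots> = tensor_right n p a b"
    using p ab unfolding projection_fun_def mmult_def tensor_right_def by simp
  finally show "mmult (n * n * n) (tensor_right n p) (tensor_right n p) a b = tensor_right n p a b" .
qed

lemma cinner_tensor_right:
  "cinner (n * n * n) v (mvec (n * n * n) (tensor_right n p) v) =
   (\<Sum>i<n. \<Sum>j<n. \<Sum>l<n. cnj (v (i * (n * n) + (j * n + l))) *
      (\<Sum>j'<n. \<Sum>l'<n. p (j * n + l) (j' * n + l') * v (i * (n * n) + (j' * n + l'))))"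
proof -
  have "cinner (n * n * n) v (mvec (n * n * n) (tensor_right n p) v)
      = (\<Sum>i<n. \<Sum>s<n * n. cnj (v (i * (n * n) + s)) * mvec (n * n * n) (tensor_right n p) v (i * (n * n) + s))"
    unfolding cinner_def sum_lessThan_cube_right ..
  also have "\<dots> = (\<Sum>i<n. \<Sum>s<n * n. cnj (v (i * (n * n) + s)) * (\<Sum>r<n * n. p s r * v (i * (n * n) + r)))"
  proof (intro sum.cong refl)
    fix i s assume "i \<in> {..<n}" and "s \<in> {..<n * n}"
    then have i: "i < n" and s: "s < n * n" by simp_all
    have "i * (n * n) + s < n * (n * n)" using index_pair_less[OF i s] .
    then have "mvec (n * n * n) (tensor_right n p) v (i * (n * n) + s)
        = (\<Sum>r<n * n. p ((i * (n * n) + s) mod (n * n)) r * v ((i * (n * n) + s) div (n * n) * (n * n) + r))"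
      by (intro mvec_tensor_right) (simp add: mult.assoc)
    then show "cnj (v (i * (n * n) + s)) * mvec (n * n * n) (tensor_right n p) v (i * (n * n) + s)
        = cnj (v (i * (n * n) + s)) * (\<Sum>r<n * n. p s r * v (i * (n * n) + r))"
      by (simp only: div_mod_mult_add[OF s])
  qed
  also have "\<dots> = (\<Sum>i<n. \<Sum>j<n. \<Sum>l<n. cnj (v (i * (n * n) + (j * n + l))) *
      (\<Sum>j'<n. \<Sum>l'<n. p (j * n + l) (j' * n + l') * v (i * (n * n) + (j' * n + l'))))"
    by (simp only: sum_lessThan_mult)
  finally show ?thesis .
qed

lemma q_relation_tensor_complement:
  assumes p: "projection_fun (n * n) p" and n: "0 < n"
    and rel: "q_relation (n * n * n) Q (tensor_left n p) (tensor_right n p)"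
  shows "q_relation (n * n * n) Q (tensor_left n (\<lambda>i j. kdelta i j - p i j)) (tensor_right n (\<lambda>i j. kdelta i j - p i j))"
  unfolding tensor_left_complement[OF n] tensor_right_complement[OF n]
  using projection_fun_tensor_left[OF p] projection_fun_tensor_right[OF p] rel
  by (rule q_relation_complement)

section \<open>The partial trace\<close>

locale square_projection =
  fixes n :: nat and p :: "nat \<Rightarrow> nat \<Rightarrow> complex"
  assumes projection: "projection_fun (n * n) p"
begin

lemma hermitian: "a < n * n \<Longrightarrow> b < n * n \<Longrightarrow> p b a = cnj (p a b)"
  using projection unfolding projection_fun_def hermitian_fun_def by blast

lemma idempotent: "a < n * n \<Longrightarrow> b < n * n \<Longrightarrow> (\<Sum>k<n * n. p a k * p k b) = p a b"
  using projection unfolding projection_fun_def mmult_def by blast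

lemma sum_cnj_mult_rows:
  assumes "a < n * n" "b < n * n"
  shows "(\<Sum>k<n * n. cnj (p a k) * p b k) = p b a"
proof -
  have "(\<Sum>k<n * n. cnj (p a k) * p b k) = (\<Sum>k<n * n. p b k * p k a)"
    using assms by (intro sum.cong refl) (simp add: hermitian[of _ a] mult.commute)
  also have "\<dots> = p b a" using idempotent[OF assms(2,1)] .
  finally show ?thesis .
qed

lemma sum_cnj_mult_cols:
  assumes "a < n * n" "b < n * n"
  shows "(\<Sum>m<n * n. cnj (p m a) * p m b) = p a b"
proof -
  have "(\<Sum>m<n * n. cnj (p m a) * p m b) = (\<Sum>m<n * n. p a m * p m b)"
    using assms by (intro sum.cong refl) (simp add: hermitian[of a])
  also have "\<dots> = p a b" using idempotent[OF assms] .
  finally show ?thesis .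
qed

lemma complement: "square_projection n (\<lambda>i j. kdelta i j - p i j)"
  using projection_fun_complement[OF projection] by unfold_locales

(* col_tensor k x is (P e_k) (x) x, block_form x j j' = <e_j (x) x, P (e_j' (x) x)>, and
   slice x m j is the conjugate of the m-th entry of P (e_j (x) x). *)
definition col_tensor :: "nat \<Rightarrow> (nat \<Rightarrow> complex) \<Rightarrow> nat \<Rightarrow> complex" where
  "col_tensor k x a = p (a div n) k * x (a mod n)"

definition partial_trace :: "nat \<Rightarrow> nat \<Rightarrow> complex" where
  "partial_trace j j' = (\<Sum>i<n. p (i * n + j) (i * n + j'))"

definition slice :: "(nat \<Rightarrow> complex) \<Rightarrow> nat \<Rightarrow> nat \<Rightarrow> complex" where
  "slice x m j = cnj (\<Sum>l<n. p m (j * n + l) * x l)"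

definition block_form :: "(nat \<Rightarrow> complex) \<Rightarrow> nat \<Rightarrow> nat \<Rightarrow> complex" where
  "block_form x j j' = (\<Sum>l<n. \<Sum>l'<n. cnj (x l) * p (j * n + l) (j' * n + l') * x l')"

lemma col_tensor_at:
  assumes "l < n"
  shows "col_tensor k x (i * (n * n) + (j * n + l)) = p (i * n + j) k * x l"
proof -
  have index: "i * (n * n) + (j * n + l) = (i * n + j) * n + l" by (simp add: algebra_simps)
  show ?thesis unfolding col_tensor_def index div_mod_mult_add[OF assms] ..
qed

lemma cinner_col_tensor:
  "cinner (n * n * n) (col_tensor k x) (mvec (n * n * n) (tensor_right n p) (col_tensor k x)) =
   (\<Sum>i<n. \<Sum>j<n. \<Sum>j'<n. cnj (p (i * n + j) k) * p (i * n + j') k * block_form x j j')"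
proof -
  have "cinner (n * n * n) (col_tensor k x) (mvec (n * n * n) (tensor_right n p) (col_tensor k x)) =
     (\<Sum>i<n. \<Sum>j<n. \<Sum>l<n. cnj (p (i * n + j) k * x l) *
      (\<Sum>j'<n. \<Sum>l'<n. p (j * n + l) (j' * n + l') * (p (i * n + j') k * x l')))"
    unfolding cinner_tensor_right by (intro sum.cong refl) (simp add: col_tensor_at)
  also have "\<dots> = (\<Sum>i<n. \<Sum>j<n. \<Sum>l<n. \<Sum>j'<n. \<Sum>l'<n.
       cnj (p (i * n + j) k) * p (i * n + j') k * (cnj (x l) * p (j * n + l) (j' * n + l') * x l'))"
    unfolding sum_distrib_left by (intro sum.cong refl; simp add: mult_ac)
  also have "\<dots> = (\<Sum>i<n. \<Sum>j<n. \<Sum>j'<n. \<Sum>l<n. \<Sum>l'<n.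
       cnj (p (i * n + j) k) * p (i * n + j') k * (cnj (x l) * p (j * n + l) (j' * n + l') * x l'))"
    by (intro sum.cong refl sum.swap)
  also have "\<dots> = (\<Sum>i<n. \<Sum>j<n. \<Sum>j'<n. cnj (p (i * n + j) k) * p (i * n + j') k * block_form x j j')"
    unfolding block_form_def sum_distrib_left by (intro sum.cong refl; simp add: mult_ac)
  finally show ?thesis .
qed

lemma sum_cinner_col_tensor:
  "(\<Sum>k<n * n. cinner (n * n * n) (col_tensor k x) (mvec (n * n * n) (tensor_right n p) (col_tensor k x)))
    = (\<Sum>j<n. \<Sum>j'<n. partial_trace j' j * block_form x j j')"
proof -
  have "(\<Sum>k<n * n. cinner (n * n * n) (col_tensor k x) (mvec (n * n * n) (tensor_right n p) (col_tensor k x)))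
      = (\<Sum>i<n. \<Sum>j<n. \<Sum>j'<n. \<Sum>k<n * n. cnj (p (i * n + j) k) * p (i * n + j') k * block_form x j j')"
    unfolding cinner_col_tensor by (rule sum_rotate4)
  also have "\<dots> = (\<Sum>i<n. \<Sum>j<n. \<Sum>j'<n. p (i * n + j') (i * n + j) * block_form x j j')"
  proof (intro sum.cong refl)
    fix i j j' assume "i \<in> {..<n}" "j \<in> {..<n}" "j' \<in> {..<n}"
    then have "i * n + j < n * n" "i * n + j' < n * n" by (simp_all add: index_pair_less)
    then show "(\<Sum>k<n * n. cnj (p (i * n + j) k) * p (i * n + j') k * block_form x j j')
        = p (i * n + j') (i * n + j) * block_form x j j'"
      by (simp add: sum_distrib_right[symmetric] sum_cnj_mult_rows)
  qed
  also have "\<dots> = (\<Sum>j<n. \<Sum>j'<n. partial_trace j' j * block_form x j j')"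
    unfolding partial_trace_def sum_distrib_right by (rule sum_rotate3)
  finally show ?thesis .
qed

lemma block_form_gram:
  assumes "j < n" "j' < n"
  shows "block_form x j j' = (\<Sum>m<n * n. slice x m j * cnj (slice x m j'))"
proof -
  have "(\<Sum>m<n * n. slice x m j * cnj (slice x m j')) =
        (\<Sum>m<n * n. \<Sum>l<n. \<Sum>l'<n. cnj (p m (j * n + l)) * p m (j' * n + l') * (cnj (x l) * x l'))"
    unfolding slice_def cnj_sum sum_product complex_cnj_cnj by (intro sum.cong refl; simp add: mult_ac)
  also have "\<dots> = (\<Sum>l<n. \<Sum>l'<n. \<Sum>m<n * n. cnj (p m (j * n + l)) * p m (j' * n + l') * (cnj (x l) * x l'))"
    by (rule sum_rotate3)
  also have "\<dots> = (\<Sum>l<n. \<Sum>l'<n. p (j * n + l) (j' * n + l') * (cnj (x l) * x l'))"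
  proof (intro sum.cong refl)
    fix l l' assume "l \<in> {..<n}" "l' \<in> {..<n}"
    then have "j * n + l < n * n" "j' * n + l' < n * n" using assms by (simp_all add: index_pair_less)
    then show "(\<Sum>m<n * n. cnj (p m (j * n + l)) * p m (j' * n + l') * (cnj (x l) * x l'))
        = p (j * n + l) (j' * n + l') * (cnj (x l) * x l')"
      by (simp add: sum_distrib_right[symmetric] sum_cnj_mult_cols)
  qed
  also have "\<dots> = block_form x j j'" unfolding block_form_def by (intro sum.cong refl; simp add: mult_ac)
  finally show ?thesis by simp
qed

lemma sum_quadratic_col_tensor:
  "(\<Sum>k<n * n. cinner (n * n * n) (col_tensor k x) (mvec (n * n * n) (tensor_right n p) (col_tensor k x)))
    = (\<Sum>m<n * n. cinner n (slice x m) (mvec n partial_trace (slice x m)))"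
proof -
  have "(\<Sum>j<n. \<Sum>j'<n. partial_trace j' j * block_form x j j')
      = (\<Sum>j<n. \<Sum>j'<n. \<Sum>m<n * n. partial_trace j' j * (slice x m j * cnj (slice x m j')))"
    by (intro sum.cong refl) (simp add: block_form_gram sum_distrib_left)
  also have "\<dots> = (\<Sum>m<n * n. \<Sum>j<n. \<Sum>j'<n. partial_trace j' j * (slice x m j * cnj (slice x m j')))"
    by (rule sum_rotate3[symmetric])
  also have "\<dots> = (\<Sum>m<n * n. \<Sum>j'<n. \<Sum>j<n. partial_trace j' j * (slice x m j * cnj (slice x m j')))"
    by (intro sum.cong refl sum.swap)
  also have "\<dots> = (\<Sum>m<n * n. cinner n (slice x m) (mvec n partial_trace (slice x m)))"
    unfolding cinner_mvec_double_sum by (intro sum.cong refl; simp add: mult_ac)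
  finally show ?thesis using sum_cinner_col_tensor by simp
qed

lemma sum_norm_slice: "(\<Sum>m<n * n. cinner n (slice x m) (slice x m)) = cinner n x (mvec n partial_trace x)"
proof -
  have "(\<Sum>m<n * n. cinner n (slice x m) (slice x m)) = (\<Sum>j<n. \<Sum>m<n * n. slice x m j * cnj (slice x m j))"
    unfolding cinner_def by (subst sum.swap) (simp add: mult.commute)
  also have "\<dots> = (\<Sum>j<n. block_form x j j)" by (intro sum.cong refl block_form_gram[symmetric]) auto
  also have "\<dots> = (\<Sum>l<n. \<Sum>l'<n. \<Sum>j<n. cnj (x l) * p (j * n + l) (j * n + l') * x l')"
    unfolding block_form_def by (rule sum_rotate3)
  also have "\<dots> = cinner n x (mvec n partial_trace x)"
    unfolding cinner_mvec_double_sum partial_trace_def sum_distrib_left sum_distrib_right ..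
  finally show ?thesis .
qed

lemma psd_partial_trace: "psd_fun n partial_trace"
  unfolding psd_fun_def hermitian_fun_def
proof (intro conjI allI impI)
  fix i j assume "i < n" "j < n"
  then show "partial_trace j i = cnj (partial_trace i j)"
    unfolding partial_trace_def cnj_sum by (intro sum.cong refl hermitian) (simp_all add: index_pair_less)
next
  fix y
  show "0 \<le> Re (cinner n y (mvec n partial_trace y))"
    unfolding sum_norm_slice[symmetric] Re_sum by (intro sum_nonneg Re_cinner_self_nonneg)
qed

lemma diag_sum_partial_trace: "(\<Sum>j<n. partial_trace j j) = (\<Sum>a<n * n. p a a)"
  unfolding partial_trace_def sum_lessThan_mult by (rule sum.swap)

lemma sum_norm_col_tensor:
  "(\<Sum>k<n * n. cinner (n * n * n) (col_tensor k x) (col_tensor k x)) = (\<Sum>a<n * n. p a a) * cinner n x x"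
proof -
  have "cinner (n * n * n) (col_tensor k x) (col_tensor k x) = (\<Sum>m<n * n. cnj (p m k) * p m k) * cinner n x x" for k
  proof -
    have "cinner (n * n * n) (col_tensor k x) (col_tensor k x)
        = (\<Sum>m<n * n. \<Sum>l<n. cnj (p m k) * p m k * (cnj (x l) * x l))"
      unfolding cinner_def sum_lessThan_cube_left col_tensor_def by (intro sum.cong refl; simp add: mult_ac)
    then show ?thesis unfolding cinner_def sum_product .
  qed
  then have "(\<Sum>k<n * n. cinner (n * n * n) (col_tensor k x) (col_tensor k x))
      = (\<Sum>k<n * n. \<Sum>m<n * n. cnj (p m k) * p m k) * cinner n x x"
    by (simp add: sum_distrib_right)
  also have "(\<Sum>k<n * n. \<Sum>m<n * n. cnj (p m k) * p m k) = (\<Sum>k<n * n. p k k)"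
    by (intro sum.cong refl sum_cnj_mult_cols) auto
  finally show ?thesis .
qed

lemma col_tensor_in_range:
  assumes "a < n * n * n" "k < n * n"
  shows "mvec (n * n * n) (tensor_left n p) (col_tensor k x) a = col_tensor k x a"
proof -
  have "mvec (n * n * n) (tensor_left n p) (col_tensor k x) a = (\<Sum>m<n * n. p (a div n) m * p m k) * x (a mod n)"
    unfolding col_tensor_def by (rule mvec_tensor_left[OF assms(1)])
  also have "(\<Sum>m<n * n. p (a div n) m * p m k) = p (a div n) k"
    using assms by (intro idempotent) (simp_all add: less_mult_imp_div_less)
  finally show ?thesis unfolding col_tensor_def .
qed

lemma diag_sum_pos:
  assumes "a < n * n" "b < n * n" "p a b \<noteq> 0"
  shows "0 < Re (\<Sum>i<n * n. p i i)"
proof -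
  have diag: "Re (p i i) = (\<Sum>m<n * n. (cmod (p m i))\<^sup>2)" if "i < n * n" for i
    using sum_cnj_mult_cols[OF that that] unfolding cmod_power2
    by (simp flip: sum_cnj_mult_cols[OF that that] add: Re_sum power2_eq_square)
  have "0 < (cmod (p a b))\<^sup>2" using assms(3) by simp
  also have "\<dots> \<le> Re (p b b)" unfolding diag[OF assms(2)] using assms(1) by (intro member_le_sum) auto
  also have "\<dots> \<le> (\<Sum>i<n * n. Re (p i i))"
    using assms(2) diag by (intro member_le_sum) (auto intro: sum_nonneg)
  finally show ?thesis unfolding Re_sum .
qed

theorem trace_lower_bound:
  assumes n: "0 < n" and Q: "0 < Q"
    and rel: "q_relation (n * n * n) Q (tensor_left n p) (tensor_right n p)"
    and nonzero: "a < n * n" "b < n * n" "p a b \<noteq> 0"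
  shows "4 * (real n - 1) * min 1 (1 / Q\<^sup>2) \<le> Re (\<Sum>i<n * n. p i i)"
proof -
  define c where "c = min 1 (1 / Q\<^sup>2)"
  let ?v = "\<lambda>k x. col_tensor k x" and ?M = "tensor_right n p" and ?N = "n * n * n"
  have range: "c * Re (cinner ?N (?v k x) (?v k x)) \<le> Re (cinner ?N (?v k x) (mvec ?N ?M (?v k x)))"
    if "k < n * n" for k x
    unfolding c_def using projection_fun_tensor_left[OF projection] projection_fun_tensor_right[OF projection]
      rel Q col_tensor_in_range[OF _ that] by (rule q_relation_range_bound)
  have "c * Re (\<Sum>j<n. partial_trace j j) * Re (cinner n x x)
      \<le> max_rayleigh n partial_trace * Re (cinner n x (mvec n partial_trace x))" for x
  proof -
    have "c * Re (\<Sum>j<n. partial_trace j j) * Re (cinner n x x)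
        = c * (\<Sum>k<n * n. Re (cinner ?N (?v k x) (?v k x)))"
      unfolding diag_sum_partial_trace Re_sum[symmetric] sum_norm_col_tensor
      by (subst (2) cinner_self_real) simp
    also have "\<dots> \<le> (\<Sum>k<n * n. Re (cinner ?N (?v k x) (mvec ?N ?M (?v k x))))"
      unfolding sum_distrib_left by (intro sum_mono range) simp
    also have "\<dots> = (\<Sum>m<n * n. Re (cinner n (slice x m) (mvec n partial_trace (slice x m))))"
      unfolding Re_sum[symmetric] sum_quadratic_col_tensor ..
    also have "\<dots> \<le> (\<Sum>m<n * n. max_rayleigh n partial_trace * Re (cinner n (slice x m) (slice x m)))"
      by (intro sum_mono quadratic_le_max_rayleigh psd_partial_trace)
    also have "\<dots> = max_rayleigh n partial_trace * Re (cinner n x (mvec n partial_trace x))"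
      unfolding sum_distrib_left[symmetric] Re_sum[symmetric] sum_norm_slice ..
    finally show ?thesis .
  qed
  moreover have "0 < Re (\<Sum>j<n. partial_trace j j)"
    unfolding diag_sum_partial_trace using nonzero by (rule diag_sum_pos)
  ultimately have "4 * (real n - 1) * c \<le> Re (\<Sum>j<n. partial_trace j j)"
    using Q unfolding c_def by (intro trace_ge_of_max_rayleigh_bound[OF psd_partial_trace n]) auto
  then show ?thesis unfolding c_def diag_sum_partial_trace .
qed

end

lemma index_mult_mat_eq_mmult:
  fixes X Y :: "complex mat"
  assumes X: "X \<in> carrier_mat K K" and Y: "Y \<in> carrier_mat K K"
    and f: "\<And>a b. a < K \<Longrightarrow> b < K \<Longrightarrow> X $$ (a, b) = f a b"
    and g: "\<And>a b. a < K \<Longrightarrow> b < K \<Longrightarrow> Y $$ (a, b) = g a b"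
    and a: "a < K" and b: "b < K"
  shows "(X * Y) $$ (a, b) = mmult K f g a b"
  using X Y a b unfolding mmult_def
  by (auto simp: scalar_prod_def lessThan_atLeast0 f g intro!: sum.cong)

lemma hermitian_fun_mat:
  fixes P :: "complex mat"
  assumes P: "P \<in> carrier_mat N N" and herm: "mat_adjoint P = P"
  shows "hermitian_fun N (\<lambda>i j. P $$ (i, j))"
  unfolding hermitian_fun_def
proof (intro allI impI)
  fix i j assume i: "i < N" and j: "j < N"
  have "P $$ (j, i) = mat_adjoint P $$ (j, i)" using herm by simp
  also have "\<dots> = cnj (P $$ (i, j))"
    unfolding mat_adjoint_def using P i j by (subst mat_of_rows_index) auto
  finally show "P $$ (j, i) = cnj (P $$ (i, j))" .
qed

lemma projection_fun_mat:
  fixes P :: "complex mat"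
  assumes P: "P \<in> carrier_mat N N" and herm: "mat_adjoint P = P" and idem: "P * P = P"
  shows "projection_fun N (\<lambda>i j. P $$ (i, j))"
  unfolding projection_fun_def
  using hermitian_fun_mat[OF P herm] index_mult_mat_eq_mmult[OF P P, of "\<lambda>i j. P $$ (i, j)"] idem
  by simp

lemma kron_left_index:
  fixes P :: "complex mat"
  assumes P: "P \<in> carrier_mat (n * n) (n * n)" and a: "a < n * n * n" and b: "b < n * n * n"
  shows "kron P (1\<^sub>m n) $$ (a, b) = tensor_left n (\<lambda>i j. P $$ (i, j)) a b"
proof -
  have "0 < n" using a by (cases n) auto
  then show ?thesis unfolding kron_def tensor_left_def kdelta_def using P a b by (simp add: mult.assoc)
qed

lemma kron_right_index:
  fixes P :: "complex mat"
  assumes P: "P \<in> carrier_mat (n * n) (n * n)" and a: "a < n * n * n" and b: "b < n * n * n"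
  shows "kron (1\<^sub>m n) P $$ (a, b) = tensor_right n (\<lambda>i j. P $$ (i, j)) a b"
proof -
  have "a div (n * n) < n" "b div (n * n) < n"
    using a b by (simp_all add: less_mult_imp_div_less mult.assoc)
  then show ?thesis unfolding kron_def tensor_right_def kdelta_def using P a b by (simp add: mult.assoc)
qed

lemma q_relation_of_kron:
  fixes P :: "complex mat"
  assumes P: "P \<in> carrier_mat (n * n) (n * n)"
    and eqn: "complex_of_real (Q ^ 2) \<cdot>\<^sub>m
                (kron P (1\<^sub>m n) * kron (1\<^sub>m n) P * kron P (1\<^sub>m n)
                 - kron (1\<^sub>m n) P * kron P (1\<^sub>m n) * kron (1\<^sub>m n) P)
              = kron P (1\<^sub>m n) - kron (1\<^sub>m n) P"
  shows "q_relation (n * n * n) Q (tensor_left n (\<lambda>i j. P $$ (i, j))) (tensor_right n (\<lambda>i j. P $$ (i, j)))"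
  unfolding q_relation_def
proof (intro allI impI)
  fix a b assume a: "a < n * n * n" and b: "b < n * n * n"
  let ?X = "kron P (1\<^sub>m n)" and ?Y = "kron (1\<^sub>m n) P" and ?N = "n * n * n"
  let ?L = "tensor_left n (\<lambda>i j. P $$ (i, j))" and ?R = "tensor_right n (\<lambda>i j. P $$ (i, j))"
  have X: "?X \<in> carrier_mat ?N ?N" and Y: "?Y \<in> carrier_mat ?N ?N"
    using P unfolding kron_def by (simp_all add: mult.assoc)
  note XL = kron_left_index[OF P] and YR = kron_right_index[OF P]
  have "(?X * ?Y * ?X) $$ (a, b) = mmult ?N (mmult ?N ?L ?R) ?L a b"
    using X Y by (intro index_mult_mat_eq_mmult[OF _ X _ XL a b] index_mult_mat_eq_mmult[OF X Y XL YR]) auto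
  moreover have "(?Y * ?X * ?Y) $$ (a, b) = mmult ?N (mmult ?N ?R ?L) ?R a b"
    using X Y by (intro index_mult_mat_eq_mmult[OF _ Y _ YR a b] index_mult_mat_eq_mmult[OF Y X YR XL]) auto
  moreover have "(complex_of_real (Q ^ 2) \<cdot>\<^sub>m (?X * ?Y * ?X - ?Y * ?X * ?Y)) $$ (a, b) = (?X - ?Y) $$ (a, b)"
    using eqn by simp
  ultimately show "complex_of_real (Q\<^sup>2) * (mmult ?N (mmult ?N ?L ?R) ?L a b - mmult ?N (mmult ?N ?R ?L) ?R a b)
      = ?L a b - ?R a b"
    using X Y a b XL[OF a b] YR[OF a b] by simp
qed

lemma kron_one_one: "kron (1\<^sub>m n) (1\<^sub>m n) = (1\<^sub>m (n * n) :: 'a :: comm_ring_1 mat)"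
proof (rule eq_matI)
  fix a b assume "a < dim_row (1\<^sub>m (n * n) :: 'a mat)" "b < dim_col (1\<^sub>m (n * n) :: 'a mat)"
  then have a: "a < n * n" and b: "b < n * n" by simp_all
  then have "0 < n" by (cases n) auto
  moreover have "a div n < n" "b div n < n" using a b by (simp_all add: less_mult_imp_div_less)
  moreover have "(a div n = b div n \<and> a mod n = b mod n) \<longleftrightarrow> a = b" by (metis div_mult_mod_eq)
  ultimately show "kron (1\<^sub>m n) (1\<^sub>m n) $$ (a, b) = (1\<^sub>m (n * n) :: 'a mat) $$ (a, b)"
    unfolding kron_def using a b by auto
qed (simp_all add: kron_def)

lemma mat_entry_neq:
  assumes "A \<in> carrier_mat N M" "B \<in> carrier_mat N M" "A \<noteq> B"
  obtains i j where "i < N" "j < M" "A $$ (i, j) \<noteq> B $$ (i, j)"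
  using assms eq_matI[of B A] by (metis carrier_matD)

section \<open>The exceptional cases\<close>

lemma min_one_inverse_square_ge:
  fixes Q :: real
  assumes "0 < Q" "Q \<le> 2"
  shows "1 \<le> 4 * min 1 (1 / Q\<^sup>2)"
proof -
  have "Q\<^sup>2 \<le> 2\<^sup>2" using assms by (intro power_mono) auto
  then have "1 / 4 \<le> 1 / Q\<^sup>2" using assms by (simp add: field_simps)
  then show ?thesis by simp
qed

lemma eq_two_of_min_one_inverse_square:
  fixes Q :: real
  assumes "0 < Q" "Q \<le> 2" "4 * min 1 (1 / Q\<^sup>2) \<le> 1"
  shows "Q = 2"
proof -
  have "2\<^sup>2 \<le> Q\<^sup>2" using assms by (simp add: min_def field_simps split: if_splits)
  then have "2 \<le> Q" using power2_le_imp_le[of 2 Q] assms(1) by simp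
  then show ?thesis using assms(2) by simp
qed

lemma rank_exceptional_cases:
  fixes n r :: nat and c :: real
  assumes n: "2 \<le> n" and c: "1 \<le> 4 * c"
    and lower: "4 * (real n - 1) * c \<le> real r"
    and upper: "4 * (real n - 1) * c \<le> real (n * n) - real r"
  shows "n \<ge> 2 * r \<longrightarrow> n = 2 \<and> r = 1 \<and> 4 * c \<le> 1"
    and "2 * r \<ge> 2 * n ^ 2 - n \<longrightarrow> n = 2 \<and> r = 3 \<and> 4 * c \<le> 1"
proof -
  have "(real n - 1) * 1 \<le> (real n - 1) * (4 * c)" using c n by (intro mult_left_mono) auto
  then have "real n - 1 \<le> 4 * (real n - 1) * c" by (simp add: algebra_simps)
  then have r: "real n - 1 \<le> real r" and nr: "real n - 1 \<le> real (n * n) - real r"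
    using lower upper by linarith+
  show "n \<ge> 2 * r \<longrightarrow> n = 2 \<and> r = 1 \<and> 4 * c \<le> 1"
  proof
    assume "n \<ge> 2 * r"
    then have "n = 2" "r = 1" using r n by linarith+
    then show "n = 2 \<and> r = 1 \<and> 4 * c \<le> 1" using lower by simp
  qed
  show "2 * r \<ge> 2 * n ^ 2 - n \<longrightarrow> n = 2 \<and> r = 3 \<and> 4 * c \<le> 1"
  proof
    assume "2 * r \<ge> 2 * n ^ 2 - n"
    moreover have "real (2 * n ^ 2 - n) = 2 * real (n * n) - real n"
      using n by (simp add: power2_eq_square of_nat_diff)
    ultimately have "2 * real r \<ge> 2 * real (n * n) - real n" by linarith
    then have "n = 2" using nr n by linarith
    then have "r = 3" using nr \<open>2 * r \<ge> 2 * n ^ 2 - n\<close> by simp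
    then show "n = 2 \<and> r = 3 \<and> 4 * c \<le> 1" using upper \<open>n = 2\<close> by simp
  qed
qed

lemma rank_bounds_of_solution:
  fixes P :: "complex mat"
  assumes n: "0 < n" and Qpos: "0 < Q"
    and Pdim: "P \<in> carrier_mat (n * n) (n * n)"
    and herm: "mat_adjoint P = P"
    and idem: "P * P = P"
    and eqn: "complex_of_real (Q ^ 2) \<cdot>\<^sub>m
                (kron P (1\<^sub>m n) * kron (1\<^sub>m n) P * kron P (1\<^sub>m n)
                 - kron (1\<^sub>m n) P * kron P (1\<^sub>m n) * kron (1\<^sub>m n) P)
              = kron P (1\<^sub>m n) - kron (1\<^sub>m n) P"
    and nontriv: "P \<noteq> 0\<^sub>m (n * n) (n * n)" "P \<noteq> kron (1\<^sub>m n) (1\<^sub>m n)"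
  shows "4 * (real n - 1) * min 1 (1 / Q\<^sup>2) \<le> real (vec_space.rank (n * n) P)"
    and "4 * (real n - 1) * min 1 (1 / Q\<^sup>2) \<le> real (n * n) - real (vec_space.rank (n * n) P)"
proof -
  define p where "p i j = P $$ (i, j)" for i j
  define p' where "p' i j = kdelta i j - p i j" for i j
  have proj: "projection_fun (n * n) p" unfolding p_def by (rule projection_fun_mat[OF Pdim herm idem])
  interpret P: square_projection n p using proj by unfold_locales
  interpret P': square_projection n p' unfolding p'_def by (rule P.complement)
  have rel: "q_relation (n * n * n) Q (tensor_left n p) (tensor_right n p)"
    unfolding p_def by (rule q_relation_of_kron[OF Pdim eqn])
  have rel': "q_relation (n * n * n) Q (tensor_left n p') (tensor_right n p')"
    unfolding p'_def by (rule q_relation_tensor_complement[OF proj n rel])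
  obtain a b where ab: "a < n * n" "b < n * n" "p a b \<noteq> 0"
    using mat_entry_neq[OF Pdim _ nontriv(1)] unfolding p_def by auto
  obtain a' b' where "a' < n * n" "b' < n * n" "P $$ (a', b') \<noteq> 1\<^sub>m (n * n) $$ (a', b')"
    by (rule mat_entry_neq[OF Pdim one_carrier_mat nontriv(2)[unfolded kron_one_one]])
  then have ab': "a' < n * n" "b' < n * n" "p' a' b' \<noteq> 0" unfolding p'_def p_def kdelta_def by auto
  have tr: "(\<Sum>i<n * n. p i i) = of_nat (vec_space.rank (n * n) P)"
    using rank_idempotent_eq_diag_sum[OF Pdim idem] unfolding p_def by simp
  have tr': "(\<Sum>i<n * n. p' i i) = of_nat (n * n) - of_nat (vec_space.rank (n * n) P)"
    unfolding p'_def kdelta_def tr[symmetric] by (simp add: sum_subtractf)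
  show "4 * (real n - 1) * min 1 (1 / Q\<^sup>2) \<le> real (vec_space.rank (n * n) P)"
    using P.trace_lower_bound[OF n Qpos rel ab] unfolding tr by simp
  show "4 * (real n - 1) * min 1 (1 / Q\<^sup>2) \<le> real (n * n) - real (vec_space.rank (n * n) P)"
    using P'.trace_lower_bound[OF n Qpos rel' ab'] unfolding tr' by simp
qed

theorem proposition9:
  fixes n r :: nat and Q :: real and P :: "complex mat"
  assumes n2: "n \<ge> 2"
    and Qpos: "0 < Q" and Qle: "Q \<le> 2"
    and Pdim: "P \<in> carrier_mat (n * n) (n * n)"
    and herm: "mat_adjoint P = P"
    and idem: "P * P = P"
    and eqn: "complex_of_real (Q ^ 2) \<cdot>\<^sub>m
                (kron P (1\<^sub>m n) * kron (1\<^sub>m n) P * kron P (1\<^sub>m n)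
                 - kron (1\<^sub>m n) P * kron P (1\<^sub>m n) * kron (1\<^sub>m n) P)
              = kron P (1\<^sub>m n) - kron (1\<^sub>m n) P"
    and nontriv: "P \<noteq> 0\<^sub>m (n * n) (n * n)" "P \<noteq> kron (1\<^sub>m n) (1\<^sub>m n)"
    and rk: "vec_space.rank (n * n) P = r"
  shows "(n \<ge> 2 * r \<longrightarrow> Q = 2 \<and> n = 2 \<and> r = 1)
       \<and> (2 * r \<ge> 2 * n ^ 2 - n \<longrightarrow> Q = 2 \<and> n = 2 \<and> r = 3)"
proof -
  have "0 < n" using n2 by simp
  note bounds = rank_bounds_of_solution[OF this Qpos Pdim herm idem eqn nontriv, unfolded rk]
  show ?thesis
    using rank_exceptional_cases[OF n2 min_one_inverse_square_ge[OF Qpos Qle] bounds]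
      eq_two_of_min_one_inverse_square[OF Qpos Qle] by blast
qed

end
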